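(* Let $0<\alpha\le1$ and let $f\ge0$ be a solution of the spatially homogeneous inelastic Boltzmann equation for hard spheres with coefficient of normal restitution $\alpha$, $\partial_t f=Q(f,f)$, $f(0,\cdot)=f_0$, where $\int f_0\,dv=1$, $\int f_0(v)v\,dv=0$, $\int f_0(v)|v|^2\,dv=1$, and $f_0\in L^\infty_s$ for some $s>2$. Then the cooling time $$T_c:=\inf\{T\ge0:\ \mathcal{E}(t)=0\ \text{for all } t>T\}=\sup\{S\ge0:\ \mathcal{E}(t)>0\ \text{for all } t<S\},\qquad \mathcal{E}(t)=\int_{\mathbb{R}^3}f(t,v)|v|^2\,dv,$$ is infinite: $T_c=+\infty$.
   Context: Notation: $\beta=\frac{1+\alpha}{2}$, $\gamma=\frac12(1+\frac1\alpha)$, $\mathbb{S}^2_+$ a hemisphere. Post-collisional velocities $v'=v-\beta((v-v_* )\cdot n)n$, $v_*'=v_*+\beta((v-v_* )\cdot n)n$; pre-collisional ${}'v=v-\gamma((v-v_* )\cdot n)n$, ${}'v_*=v_*+\gamma((v-v_* )\cdot n)n$. The collision operator is $Q(f,g)=Q^+(f,g)-g\,Lf$, $Q^+(f,g)(v)=\alpha^{-2}\int_{\mathbb{R}^3}\int_{\mathbb{S}^2_+}|(v-v_* )\cdot n|f({}'v_* )g({}'v)\,dn\,dv_*$, $Lf(v)=\pi\int_{\mathbb{R}^3}|v-v_*|f(v_* )\,dv_*$ (weak form: $\int Q(f,g)\phi=\iiint|(v-v_* )\cdot n|f(v_* )g(v)(\phi(v')-\phi(v))\,dn\,dv_*\,dv$).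 $\|f\|_{\infty,s}=\operatorname{ess\,sup}_v f(v)(1+|v|^2)^{s/2}$ and $L^\infty_s$ is the space of measurable $f$ with this norm finite. *)

theory Defs
  imports "HOL-Analysis.Analysis"
begin

type_synonym vel = "real ^ 3"

text \<open>Integral over the hemisphere S^2_+ = {n. norm n = 1, n$1 > 0} w.r.t. surface measure,
  computed via polar coordinates: int_{S^2_+} g dsigma = 3 * int_{B(0,1), x$1>0} g(x/|x|) dx.\<close>
definition hemi_int :: "(vel \<Rightarrow> real) \<Rightarrow> real" where
  "hemi_int g = 3 * (LINT x|lborel. indicator {x::vel. norm x < 1 \<and> x $ 1 > 0} x * g (x /\<^sub>R norm x))"

definition post_vel :: "real \<Rightarrow> vel \<Rightarrow> vel \<Rightarrow> vel \<Rightarrow> vel" where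
  "post_vel \<alpha> v vs n = v - (((1 + \<alpha>) / 2) * ((v - vs) \<bullet> n)) *\<^sub>R n"

definition Q_weak :: "real \<Rightarrow> (vel \<Rightarrow> real) \<Rightarrow> (vel \<Rightarrow> real) \<Rightarrow> real" where
  "Q_weak \<alpha> g \<phi> = (LINT v|lborel. LINT vs|lborel.
      hemi_int (\<lambda>n. \<bar>(v - vs) \<bullet> n\<bar> * g vs * g v * (\<phi> (post_vel \<alpha> v vs n) - \<phi> v)))"

definition in_Linf_weighted :: "real \<Rightarrow> (vel \<Rightarrow> real) \<Rightarrow> bool" where
  "in_Linf_weighted s g \<longleftrightarrow> g \<in> borel_measurable lborel \<and>
     (\<exists>C. AE v in lborel. \<bar>g v\<bar> * (1 + (norm v)\<^sup>2) powr (s / 2) \<le> C)"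

definition test_fun :: "(vel \<Rightarrow> real) \<Rightarrow> bool" where
  "test_fun \<phi> \<longleftrightarrow> continuous_on UNIV \<phi> \<and> bounded {v. \<phi> v \<noteq> 0}"

text \<open>Weak solution on [0,infinity) in C([0,inf); L^1_2) \<inter> L^1_loc([0,inf); L^1_3).\<close>
definition is_solution :: "real \<Rightarrow> (vel \<Rightarrow> real) \<Rightarrow> (real \<Rightarrow> vel \<Rightarrow> real) \<Rightarrow> bool" where
  "is_solution \<alpha> f0 f \<longleftrightarrow>
     (\<forall>t\<ge>0. AE v in lborel. f t v \<ge> 0) \<and>
     (AE v in lborel. f 0 v = f0 v) \<and>
     (\<forall>t\<ge>0. integrable lborel (\<lambda>v. f t v * (1 + (norm v)\<^sup>2))) \<and>
     (\<forall>t0\<ge>0. ((\<lambda>t. LINT v|lborel. \<bar>f t v - f t0 v\<bar> * (1 + (norm v)\<^sup>2)) \<longlongrightarrow> 0)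
                (at t0 within {0..})) \<and>
     (\<forall>T\<ge>0. set_integrable lborel {0..T} (\<lambda>t. LINT v|lborel. f t v * (1 + (norm v) ^ 3))) \<and>
     (\<forall>\<phi>. test_fun \<phi> \<longrightarrow> (\<forall>t\<ge>0.
         set_integrable lborel {0..t} (\<lambda>s. Q_weak \<alpha> (f s) \<phi>) \<and>
         (LINT v|lborel. f t v * \<phi> v) =
           (LINT v|lborel. f0 v * \<phi> v) + (LINT s:{0..t}|lborel. Q_weak \<alpha> (f s) \<phi>)))"

definition energy :: "(real \<Rightarrow> vel \<Rightarrow> real) \<Rightarrow> real \<Rightarrow> real" where
  "energy f t = (LINT v|lborel. f t v * (norm v)\<^sup>2)"

definition cooling_time :: "(real \<Rightarrow> vel \<Rightarrow> real) \<Rightarrow> ereal" where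
  "cooling_time f = Inf {ereal T | T. T \<ge> 0 \<and> (\<forall>t>T. energy f t = 0)}"

end

theory Submission
  imports Defs
begin

text \<open>If the energy of f(t) vanished, the nonnegative density f(t) could only charge the
  Lebesgue null set {0}, so f(t) = 0 almost everywhere. This contradicts conservation of mass,
  which follows from the weak formulation tested against a cutoff equal to 1 on the ball of
  radius R: the collision term only sees pairs in which one speed exceeds R/3, so it is
  O(1/R) times the squared L^1_2 norm of f(s), and that norm is bounded on [0,t] by continuity.
  Hence the mass of f(t) is at least 1 - O(1/R) for every large R.\<close>

(* Unlike integral_abs_bound_integral, h need not be integrable: the iterated integrands
   of Q_weak are not known to be. *)
lemma abs_integral_le_integral_bound:
  fixes h H :: "'a \<Rightarrow> real"
  assumes "integrable M H" "\<And>x. \<bar>h x\<bar> \<le> H x"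
  shows "\<bar>integral\<^sup>L M h\<bar> \<le> integral\<^sup>L M H"
proof -
  have "integral\<^sup>L M h \<le> integral\<^sup>L M H"
    using assms by (intro integral_mono') (auto dest: abs_le_D1 intro: order_trans[OF abs_ge_zero])
  moreover have "integral\<^sup>L M (\<lambda>x. - h x) \<le> integral\<^sup>L M H"
    using assms by (intro integral_mono') (auto dest: abs_le_D2 intro: order_trans[OF abs_ge_zero])
  ultimately show ?thesis by simp
qed

lemma integrable_mult_weight_bounded:
  fixes g u :: "'a::euclidean_space \<Rightarrow> real"
  assumes "integrable lborel (\<lambda>v. g v * (1 + (norm v)\<^sup>2))"
    and "u \<in> borel_measurable lborel" and "\<And>v. \<bar>u v\<bar> \<le> 1 + (norm v)\<^sup>2"
  shows "integrable lborel (\<lambda>v. g v * u v)"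
proof (rule Bochner_Integration.integrable_bound[OF assms(1)])
  have w_pos: "0 < 1 + (norm v)\<^sup>2" for v :: 'a
    by (simp add: add_pos_nonneg)
  have "(\<lambda>v. (g v * (1 + (norm v)\<^sup>2)) * (u v / (1 + (norm v)\<^sup>2))) \<in> borel_measurable lborel"
    using borel_measurable_integrable[OF assms(1)] assms(2) by measurable
  moreover have "(g v * (1 + (norm v)\<^sup>2)) * (u v / (1 + (norm v)\<^sup>2)) = g v * u v" for v
    using w_pos[of v] by simp
  ultimately show "(\<lambda>v. g v * u v) \<in> borel_measurable lborel" by simp
  show "AE v in lborel. norm (g v * u v) \<le> norm (g v * (1 + (norm v)\<^sup>2))"
    using assms(3) w_pos by (intro AE_I2) (simp add: abs_mult mult_left_mono less_imp_le)
qed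

lemma abs_hemi_int_le:
  assumes "\<And>n. norm n = 1 \<Longrightarrow> \<bar>g n\<bar> \<le> c"
  shows "\<bar>hemi_int g\<bar> \<le> 3 * measure lborel (ball (0::vel) 1) * c"
proof -
  have "0 \<le> c"
    using assms[of "axis 1 1"] by simp
  have "integrable lborel (\<lambda>x::vel. indicator (ball 0 1) x * c)"
    by (intro integrable_mult_left integrable_real_indicator emeasure_bounded_finite) auto
  then have "\<bar>LINT x|lborel. indicator {x::vel. norm x < 1 \<and> x $ 1 > 0} x * g (x /\<^sub>R norm x)\<bar>
      \<le> (LINT x|lborel. indicator (ball (0::vel) 1) x * c)"
  proof (rule abs_integral_le_integral_bound)
    fix x :: vel
    show "\<bar>indicator {x. norm x < 1 \<and> x $ 1 > 0} x * g (x /\<^sub>R norm x)\<bar> \<le> indicator (ball 0 1) x * c"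
    proof (cases "norm x < 1 \<and> x $ 1 > 0")
      case True
      then have "x \<noteq> 0" by auto
      then show ?thesis using True assms[of "x /\<^sub>R norm x"] by simp
    qed (simp add: \<open>0 \<le> c\<close> indicator_def)
  qed
  then show ?thesis
    unfolding hemi_int_def by simp
qed

definition cutoff :: "real \<Rightarrow> 'a::real_normed_vector \<Rightarrow> real" where
  "cutoff R v = max 0 (min 1 (R + 1 - norm v))"

lemma cutoff_nonneg: "0 \<le> cutoff R v"
  and cutoff_le_one: "cutoff R v \<le> 1"
  unfolding cutoff_def by auto

lemma cutoff_eq_one: "norm v \<le> R \<Longrightarrow> cutoff R v = 1"
  unfolding cutoff_def by auto

lemma abs_cutoff_diff_le_one: "\<bar>cutoff R x - cutoff R y\<bar> \<le> 1"
  unfolding cutoff_def by auto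

lemma borel_measurable_cutoff [measurable]: "cutoff R \<in> borel_measurable borel"
  unfolding cutoff_def by measurable

lemma test_fun_cutoff: "test_fun (cutoff R)"
proof -
  have "{v. cutoff R v \<noteq> 0} \<subseteq> cball 0 (R + 1)"
    unfolding cutoff_def by (auto simp: max_def min_def split: if_splits)
  then have "bounded {v. cutoff R v \<noteq> (0::real)}"
    using bounded_cball bounded_subset by blast
  moreover have "continuous_on UNIV (cutoff R :: vel \<Rightarrow> real)"
    unfolding cutoff_def by (intro continuous_intros)
  ultimately show ?thesis
    unfolding test_fun_def by blast
qed

lemma norm_post_vel_le:
  assumes "\<bar>1 + \<alpha>\<bar> \<le> 2" "norm n = 1"
  shows "norm (post_vel \<alpha> v vs n) \<le> 2 * norm v + norm vs"
proof -
  have "norm (post_vel \<alpha> v vs n) \<le> norm v + \<bar>(1 + \<alpha>) / 2\<bar> * \<bar>(v - vs) \<bullet> n\<bar>"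
    unfolding post_vel_def using norm_triangle_ineq4 assms(2) by (metis abs_mult norm_scaleR mult_1_right)
  also have "\<dots> \<le> norm v + 1 * norm (v - vs)"
    using assms Cauchy_Schwarz_ineq2[of "v - vs" n] by (intro add_left_mono mult_mono) auto
  also have "\<dots> \<le> 2 * norm v + norm vs"
    using norm_triangle_ineq4[of v vs] by simp
  finally show ?thesis .
qed

lemma max_mult_add_le:
  fixes a b :: real
  assumes "0 \<le> a" "0 \<le> b"
  shows "max a b * (a + b) \<le> 2 * ((1 + a\<^sup>2) * (1 + b\<^sup>2))"
proof -
  have "max a b * (a + b) \<le> max a b * (2 * max a b)"
    using assms by (intro mult_left_mono) auto
  also have "\<dots> = 2 * (max a b)\<^sup>2"
    by (simp add: power2_eq_square)
  also have "\<dots> \<le> 2 * ((1 + a\<^sup>2) * (1 + b\<^sup>2))"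
    using assms by (simp add: max_def algebra_simps)
  finally show ?thesis .
qed

lemma collision_integrand_cutoff_bound:
  assumes "\<bar>1 + \<alpha>\<bar> \<le> 2" "0 < R" "norm n = 1"
  shows "\<bar>\<bar>(v - vs) \<bullet> n\<bar> * g vs * g v * (cutoff R (post_vel \<alpha> v vs n) - cutoff R v)\<bar>
    \<le> 6 / R * (\<bar>g v\<bar> * (1 + (norm v)\<^sup>2)) * (\<bar>g vs\<bar> * (1 + (norm vs)\<^sup>2))"
proof (cases "max (norm v) (norm vs) \<le> R / 3")
  case True
  then have "norm (post_vel \<alpha> v vs n) \<le> R"
    using norm_post_vel_le[OF assms(1,3), of v vs] by simp
  then have "cutoff R (post_vel \<alpha> v vs n) = cutoff R v"
    using True assms(2) by (simp add: cutoff_eq_one)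
  then show ?thesis
    using assms(2) by simp
next
  case False
  have "R / 3 * (norm v + norm vs) \<le> max (norm v) (norm vs) * (norm v + norm vs)"
    using False by (intro mult_right_mono) auto
  also have "\<dots> \<le> 2 * ((1 + (norm v)\<^sup>2) * (1 + (norm vs)\<^sup>2))"
    by (rule max_mult_add_le) auto
  finally have speed: "norm v + norm vs \<le> 6 / R * ((1 + (norm v)\<^sup>2) * (1 + (norm vs)\<^sup>2))"
    using assms(2) by (simp add: field_simps)
  have "\<bar>(v - vs) \<bullet> n\<bar> \<le> norm v + norm vs"
    using Cauchy_Schwarz_ineq2[of "v - vs" n] norm_triangle_ineq4[of v vs] assms(3) by simp
  moreover have "\<bar>cutoff R (post_vel \<alpha> v vs n) - cutoff R v\<bar> \<le> 1"
    by (rule abs_cutoff_diff_le_one)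
  ultimately have "\<bar>(v - vs) \<bullet> n\<bar> * (\<bar>g vs\<bar> * \<bar>g v\<bar>) * \<bar>cutoff R (post_vel \<alpha> v vs n) - cutoff R v\<bar>
      \<le> (6 / R * ((1 + (norm v)\<^sup>2) * (1 + (norm vs)\<^sup>2))) * (\<bar>g vs\<bar> * \<bar>g v\<bar>) * 1"
    using speed assms(2) by (intro mult_mono) (auto intro!: mult_nonneg_nonneg add_nonneg_nonneg)
  then show ?thesis
    by (simp only: abs_mult abs_abs mult_1_right ac_simps)
qed

definition L12_norm :: "('a::euclidean_space \<Rightarrow> real) \<Rightarrow> real" where
  "L12_norm g = (LINT v|lborel. \<bar>g v\<bar> * (1 + (norm v)\<^sup>2))"

lemma L12_norm_nonneg: "0 \<le> L12_norm g"
  unfolding L12_norm_def by (intro integral_nonneg_AE AE_I2) simp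

lemma integrable_abs_mult_weight:
  fixes g :: "'a::euclidean_space \<Rightarrow> real"
  assumes "integrable lborel (\<lambda>v. g v * (1 + (norm v)\<^sup>2))"
  shows "integrable lborel (\<lambda>v. \<bar>g v\<bar> * (1 + (norm v)\<^sup>2))"
proof -
  have "\<bar>g v * (1 + (norm v)\<^sup>2)\<bar> = \<bar>g v\<bar> * (1 + (norm v)\<^sup>2)" for v :: 'a
    by (simp add: abs_mult)
  then show ?thesis
    using integrable_abs[OF assms] by simp
qed

lemma abs_Q_weak_cutoff_le:
  assumes "\<bar>1 + \<alpha>\<bar> \<le> 2" "0 < R" "integrable lborel (\<lambda>v. g v * (1 + (norm v)\<^sup>2))"
  shows "\<bar>Q_weak \<alpha> g (cutoff R)\<bar> \<le> 18 * measure lborel (ball (0::vel) 1) / R * (L12_norm g)\<^sup>2"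
proof -
  define c where "c = 18 * measure lborel (ball (0::vel) 1) / R"
  define G where "G v = \<bar>g v\<bar> * (1 + (norm v)\<^sup>2)" for v
  have G_int: "integrable lborel G"
    unfolding G_def using assms(3) by (rule integrable_abs_mult_weight)
  have inner: "\<bar>hemi_int (\<lambda>n. \<bar>(v - vs) \<bullet> n\<bar> * g vs * g v * (cutoff R (post_vel \<alpha> v vs n) - cutoff R v))\<bar>
      \<le> c * G v * G vs" for v vs
  proof -
    have "\<bar>hemi_int (\<lambda>n. \<bar>(v - vs) \<bullet> n\<bar> * g vs * g v * (cutoff R (post_vel \<alpha> v vs n) - cutoff R v))\<bar>
      \<le> 3 * measure lborel (ball (0::vel) 1) * (6 / R * G v * G vs)"
      unfolding G_def using collision_integrand_cutoff_bound[OF assms(1,2)] by (rule abs_hemi_int_le)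
    then show ?thesis
      unfolding c_def by (simp add: field_simps)
  qed
  have middle: "\<bar>LINT vs|lborel. hemi_int (\<lambda>n. \<bar>(v - vs) \<bullet> n\<bar> * g vs * g v * (cutoff R (post_vel \<alpha> v vs n) - cutoff R v))\<bar>
      \<le> c * L12_norm g * G v" for v
  proof -
    have "\<bar>LINT vs|lborel. hemi_int (\<lambda>n. \<bar>(v - vs) \<bullet> n\<bar> * g vs * g v * (cutoff R (post_vel \<alpha> v vs n) - cutoff R v))\<bar>
      \<le> (LINT vs|lborel. c * G v * G vs)"
      using G_int inner by (intro abs_integral_le_integral_bound) auto
    also have "\<dots> = c * L12_norm g * G v"
      unfolding L12_norm_def G_def by simp
    finally show ?thesis .
  qed
  have "\<bar>Q_weak \<alpha> g (cutoff R)\<bar> \<le> (LINT v|lborel. c * L12_norm g * G v)"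
    unfolding Q_weak_def using G_int middle by (intro abs_integral_le_integral_bound) auto
  also have "\<dots> = c * (L12_norm g)\<^sup>2"
    unfolding L12_norm_def G_def by (simp add: power2_eq_square)
  finally show ?thesis
    unfolding c_def .
qed

lemma abs_set_integral_Icc_le:
  fixes h :: "real \<Rightarrow> real"
  assumes "a \<le> b" "\<And>s. s \<in> {a..b} \<Longrightarrow> \<bar>h s\<bar> \<le> B"
  shows "\<bar>LINT s:{a..b}|lborel. h s\<bar> \<le> (b - a) * B"
proof -
  have "integrable lborel (\<lambda>s. indicator {a..b} s * B)"
    using assms(1) by (intro integrable_mult_left integrable_real_indicator) auto
  then have "\<bar>LINT s:{a..b}|lborel. h s\<bar> \<le> (LINT s|lborel. indicator {a..b} s * B)"
    unfolding set_lebesgue_integral_def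
    by (rule abs_integral_le_integral_bound) (simp add: assms(2) indicator_def)
  also have "\<dots> = (b - a) * B"
    using assms(1) by simp
  finally show ?thesis .
qed

lemma abs_L12_norm_diff_le:
  fixes g h :: "'a::euclidean_space \<Rightarrow> real"
  assumes "integrable lborel (\<lambda>v. g v * (1 + (norm v)\<^sup>2))"
    and "integrable lborel (\<lambda>v. h v * (1 + (norm v)\<^sup>2))"
  shows "\<bar>L12_norm g - L12_norm h\<bar> \<le> (LINT v|lborel. \<bar>g v - h v\<bar> * (1 + (norm v)\<^sup>2))"
proof -
  have "integrable lborel (\<lambda>v. (g v - h v) * (1 + (norm v)\<^sup>2))"
    using Bochner_Integration.integrable_diff[OF assms] by (simp add: left_diff_distrib)
  then have "integrable lborel (\<lambda>v. \<bar>g v - h v\<bar> * (1 + (norm v)\<^sup>2))"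
    by (rule integrable_abs_mult_weight)
  then have "\<bar>LINT v|lborel. \<bar>g v\<bar> * (1 + (norm v)\<^sup>2) - \<bar>h v\<bar> * (1 + (norm v)\<^sup>2)\<bar>
      \<le> (LINT v|lborel. \<bar>g v - h v\<bar> * (1 + (norm v)\<^sup>2))"
  proof (rule abs_integral_le_integral_bound)
    fix v :: 'a
    have "\<bar>\<bar>g v\<bar> - \<bar>h v\<bar>\<bar> * (1 + (norm v)\<^sup>2) \<le> \<bar>g v - h v\<bar> * (1 + (norm v)\<^sup>2)"
      by (intro mult_right_mono abs_triangle_ineq3) simp
    then show "\<bar>\<bar>g v\<bar> * (1 + (norm v)\<^sup>2) - \<bar>h v\<bar> * (1 + (norm v)\<^sup>2)\<bar> \<le> \<bar>g v - h v\<bar> * (1 + (norm v)\<^sup>2)"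
      by (simp add: abs_mult flip: left_diff_distrib)
  qed
  then show ?thesis
    unfolding L12_norm_def
    using assms by (simp add: integrable_abs_mult_weight)
qed

lemma solution_L12_norm_continuous:
  assumes "is_solution \<alpha> f0 f"
  shows "continuous_on {0..} (\<lambda>t. L12_norm (f t))"
  unfolding continuous_on_def
proof
  fix t0 :: real
  assume "t0 \<in> {0..}"
  let ?D = "\<lambda>t. LINT v|lborel. \<bar>f t v - f t0 v\<bar> * (1 + (norm v)\<^sup>2)"
  have D: "(?D \<longlongrightarrow> 0) (at t0 within {0..})"
    using assms \<open>t0 \<in> {0..}\<close> unfolding is_solution_def by simp
  have "\<forall>\<^sub>F t in at t0 within {0..}. norm (L12_norm (f t) - L12_norm (f t0)) \<le> ?D t"
    using assms \<open>t0 \<in> {0..}\<close> unfolding is_solution_def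
    by (auto simp: eventually_at_filter intro!: always_eventually abs_L12_norm_diff_le)
  then have "((\<lambda>t. L12_norm (f t) - L12_norm (f t0)) \<longlongrightarrow> 0) (at t0 within {0..})"
    using D by (rule Lim_null_comparison)
  then show "((\<lambda>t. L12_norm (f t)) \<longlongrightarrow> L12_norm (f t0)) (at t0 within {0..})"
    by (rule LIM_zero_cancel)
qed

lemma solution_L12_norm_bounded:
  assumes "is_solution \<alpha> f0 f" "0 \<le> t"
  obtains K where "\<And>s. s \<in> {0..t} \<Longrightarrow> L12_norm (f s) \<le> K"
proof -
  have "continuous_on {0..t} (\<lambda>s. L12_norm (f s))"
    using solution_L12_norm_continuous[OF assms(1)] by (rule continuous_on_subset) auto
  then have "bounded ((\<lambda>s. L12_norm (f s)) ` {0..t})"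
    by (intro compact_imp_bounded compact_continuous_image) auto
  then show ?thesis
    using that unfolding bounded_real by (meson abs_le_D1 image_eqI)
qed

lemma solution_cutoff_mass_ge:
  assumes "is_solution \<alpha> f0 f" "\<bar>1 + \<alpha>\<bar> \<le> 2" "0 \<le> t" "0 < R"
    and K: "\<And>s. s \<in> {0..t} \<Longrightarrow> L12_norm (f s) \<le> K"
  shows "(LINT v|lborel. f0 v * cutoff R v) - t * (18 * measure lborel (ball (0::vel) 1) * K\<^sup>2) / R
    \<le> (LINT v|lborel. f t v * cutoff R v)"
proof -
  define c where "c = 18 * measure lborel (ball (0::vel) 1) / R"
  have "0 \<le> c"
    unfolding c_def using assms(4) by simp
  have "\<bar>Q_weak \<alpha> (f s) (cutoff R)\<bar> \<le> c * K\<^sup>2" if "s \<in> {0..t}" for s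
  proof -
    have "\<bar>Q_weak \<alpha> (f s) (cutoff R)\<bar> \<le> c * (L12_norm (f s))\<^sup>2"
      unfolding c_def using assms(1) that
      by (intro abs_Q_weak_cutoff_le assms(2,4)) (auto simp: is_solution_def)
    also have "\<dots> \<le> c * K\<^sup>2"
      using \<open>0 \<le> c\<close> K[OF that] L12_norm_nonneg by (intro mult_left_mono power_mono) auto
    finally show ?thesis .
  qed
  then have "\<bar>LINT s:{0..t}|lborel. Q_weak \<alpha> (f s) (cutoff R)\<bar> \<le> (t - 0) * (c * K\<^sup>2)"
    using assms(3) by (intro abs_set_integral_Icc_le)
  moreover have "(LINT v|lborel. f t v * cutoff R v) =
      (LINT v|lborel. f0 v * cutoff R v) + (LINT s:{0..t}|lborel. Q_weak \<alpha> (f s) (cutoff R))"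
    using assms(1,3) test_fun_cutoff unfolding is_solution_def by blast
  ultimately show ?thesis
    unfolding c_def by (simp add: field_simps)
qed

lemma integral_mult_cutoff_ge:
  fixes g :: "'a::euclidean_space \<Rightarrow> real"
  assumes "\<And>v. 0 \<le> g v" "integrable lborel (\<lambda>v. g v * (1 + (norm v)\<^sup>2))" "0 \<le> R"
  shows "(LINT v|lborel. g v) - (LINT v|lborel. g v * (1 + (norm v)\<^sup>2)) / (1 + R\<^sup>2)
    \<le> (LINT v|lborel. g v * cutoff R v)"
proof -
  have g_int: "integrable lborel g"
    using integrable_mult_weight_bounded[OF assms(2), of "\<lambda>_. 1"] by simp
  have "integrable lborel (\<lambda>v. g v * cutoff R v)"
    using assms(2) by (rule integrable_mult_weight_bounded)
      (auto intro: order_trans[OF cutoff_le_one] simp: cutoff_nonneg)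
  moreover have "g v - g v * (1 + (norm v)\<^sup>2) / (1 + R\<^sup>2) \<le> g v * cutoff R v" for v
  proof (cases "norm v \<le> R")
    case True
    then show ?thesis
      using assms(1)[of v] by (simp add: cutoff_eq_one)
  next
    case False
    then have "1 + R\<^sup>2 \<le> 1 + (norm v)\<^sup>2"
      using assms(3) by (simp add: power_mono)
    then have "g v \<le> g v * (1 + (norm v)\<^sup>2) / (1 + R\<^sup>2)"
      using assms(1)[of v] by (simp add: le_divide_eq add_pos_nonneg mult_left_mono)
    then show ?thesis
      using mult_nonneg_nonneg[OF assms(1) cutoff_nonneg, of v R v] by linarith
  qed
  ultimately have "(LINT v|lborel. g v - g v * (1 + (norm v)\<^sup>2) / (1 + R\<^sup>2))
      \<le> (LINT v|lborel. g v * cutoff R v)"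
    using g_int assms(2) by (intro integral_mono) auto
  then show ?thesis
    using g_int assms(2) by simp
qed

lemma AE_eq_0_if_second_moment_eq_0:
  fixes g :: "'a::euclidean_space \<Rightarrow> real"
  assumes "AE v in lborel. 0 \<le> g v" "integrable lborel (\<lambda>v. g v * (norm v)\<^sup>2)"
    and "(LINT v|lborel. g v * (norm v)\<^sup>2) = 0"
  shows "AE v in lborel. g v = 0"
proof -
  have "AE v in lborel. g v * (norm v)\<^sup>2 = 0"
    using assms by (subst integral_nonneg_eq_0_iff_AE[symmetric]) auto
  with AE_lborel_singleton[of 0] show ?thesis
    by eventually_elim simp
qed

lemma solution_not_AE_zero:
  assumes "is_solution \<alpha> f0 f" "\<bar>1 + \<alpha>\<bar> \<le> 2" "0 \<le> t"
    and "\<And>v. 0 \<le> f0 v" "integrable lborel (\<lambda>v. f0 v * (1 + (norm v)\<^sup>2))"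
    and "0 < (LINT v|lborel. f0 v)"
  shows "\<not> (AE v in lborel. f t v = 0)"
proof
  assume "AE v in lborel. f t v = 0"
  then have vanish: "(LINT v|lborel. f t v * cutoff R v) = 0" for R
    by (intro integral_eq_zero_AE) auto
  obtain K where K: "\<And>s. s \<in> {0..t} \<Longrightarrow> L12_norm (f s) \<le> K"
    using solution_L12_norm_bounded[OF assms(1,3)] by blast
  define A where "A = (LINT v|lborel. f0 v * (1 + (norm v)\<^sup>2))"
  define C where "C = t * (18 * measure lborel (ball (0::vel) 1) * K\<^sup>2)"
  have "((\<lambda>R. A / (1 + R\<^sup>2) + C / R) \<longlongrightarrow> 0) at_top"
  proof (intro tendsto_add_zero tendsto_divide_0[OF tendsto_const])
    show "filterlim (\<lambda>R::real. R) at_infinity at_top"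
      by (rule filterlim_at_top_imp_at_infinity[OF filterlim_ident])
    show "filterlim (\<lambda>R::real. 1 + R\<^sup>2) at_infinity at_top"
      by (intro filterlim_at_top_imp_at_infinity filterlim_tendsto_add_at_top[OF tendsto_const]
          filterlim_pow_at_top filterlim_ident) simp
  qed
  then have "\<forall>\<^sub>F R in at_top. A / (1 + R\<^sup>2) + C / R < (LINT v|lborel. f0 v)"
    using assms(6) by (rule order_tendstoD(2))
  moreover have "\<forall>\<^sub>F R in at_top. (0::real) < R"
    by (rule eventually_gt_at_top)
  ultimately obtain R where "0 < R" "A / (1 + R\<^sup>2) + C / R < (LINT v|lborel. f0 v)"
    by (metis (mono_tags, lifting) eventually_at_top_linorder eventually_conj order_refl)
  moreover have "(LINT v|lborel. f0 v) - A / (1 + R\<^sup>2) \<le> (LINT v|lborel. f0 v * cutoff R v)"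
    unfolding A_def using assms(4,5) \<open>0 < R\<close> by (intro integral_mult_cutoff_ge) auto
  moreover have "(LINT v|lborel. f0 v * cutoff R v) - C / R \<le> (LINT v|lborel. f t v * cutoff R v)"
    unfolding C_def using assms(1-3) \<open>0 < R\<close> K by (rule solution_cutoff_mass_ge)
  ultimately show False
    using vanish[of R] by linarith
qed

lemma cooling_time_eq_infinity:
  assumes "\<And>t. 0 \<le> t \<Longrightarrow> energy f t \<noteq> 0"
  shows "cooling_time f = \<infinity>"
proof -
  have "\<not> (\<forall>t>T. energy f t = 0)" if "0 \<le> T" for T
    using assms[of "T + 1"] that by (auto intro!: exI[of _ "T + 1"])
  then have no_cooling: "{ereal T | T. T \<ge> 0 \<and> (\<forall>t>T. energy f t = 0)} = {}"
    by blast
  show ?thesis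
    unfolding cooling_time_def no_cooling by (simp add: top_ereal_def)
qed

theorem corollary1p2:
  fixes \<alpha> s :: real and f0 :: "vel \<Rightarrow> real" and f :: "real \<Rightarrow> vel \<Rightarrow> real"
  assumes "0 < \<alpha>" and "\<alpha> \<le> 1"
    and "\<forall>v. f0 v \<ge> 0"
    and "integrable lborel (\<lambda>v. f0 v * (1 + (norm v)\<^sup>2))"
    and "(LINT v|lborel. f0 v) = 1"
    and "(LINT v|lborel. f0 v *\<^sub>R v) = 0"
    and "(LINT v|lborel. f0 v * (norm v)\<^sup>2) = 1"
    and "s > 2" and "in_Linf_weighted s f0"
    and "is_solution \<alpha> f0 f"
  shows "cooling_time f = \<infinity>"
proof (rule cooling_time_eq_infinity)
  \<comment> \<open>Only the mass of f0 matters.\<close>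
  fix t :: real
  assume "0 \<le> t"
  then have nonneg: "AE v in lborel. 0 \<le> f t v"
    and weighted: "integrable lborel (\<lambda>v. f t v * (1 + (norm v)\<^sup>2))"
    using assms(10) unfolding is_solution_def by blast+
  have "\<not> (AE v in lborel. f t v = 0)"
    using assms(1-5,10) \<open>0 \<le> t\<close> by (intro solution_not_AE_zero) auto
  moreover have "integrable lborel (\<lambda>v. f t v * (norm v)\<^sup>2)"
    using weighted by (rule integrable_mult_weight_bounded) auto
  ultimately show "energy f t \<noteq> 0"
    using nonneg AE_eq_0_if_second_moment_eq_0 unfolding energy_def by blast
qed

end
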